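(* Let $M$ be a 4-dimensional chart domain with coordinates $(t,r,\theta,\phi)$, let $\Gamma$ be a spherically symmetric torsion-free affine connection on $M$ with coefficients given by functions $k_1,\dots,k_{12}$ of $(t,r)$ as in the context, and let $L=L(t,r,\dot t,\dot r,w)$ be an $SO(3)$-spatially spherically symmetric pseudo-Finsler function. Then the system of equations $\delta_\theta L=0=\delta_\phi L$, where $\delta_a=\partial_a-\Gamma^c{}_{ab}(x)\dot x^b\dot\partial_c$, is equivalent to $\delta_wL:=\left(wk_7\dot\partial_t+wk_{10}\dot\partial_r+(k_8\dot t+k_9\dot r)\partial_w\right)L=0$ together with $k_{11}=k_{12}=0$.
   Context: Induced coordinates $(t,r,\theta,\phi,\dot t,\dot r,\dot\theta,\dot\phi)$ on $TM$. A pseudo-Finsler function is a smooth $L$ on a conic subbundle $\mathcal{A}\subset TM\setminus\{0\}$ (open, projecting onto $M$, stable under positive rescaling of $\dot x$), positively 2-homogeneous in $\dot x$, with $g_{ab}=\tfrac12\dot\partial_a\dot\partial_bL$ non-degenerate. $SO(3)$-spatially spherically symmetric means $L$ depends only on $(t,r,\dot t,\dot r,w)$ with $w^2=\dot\theta^2+\sin^2\theta\,\dot\phi^2$; $\partial_w$ is defined by $w\partial_w=\dot\theta\dot\partial_\theta+\dot\phi\dot\partial_\phi$. The spherically symmetric torsion-free connection: the nonzero coefficients (symmetric in the lower indices) are $\Gamma^t_{tt}=k_1$, $\Gamma^t_{tr}=k_2$, $\Gamma^t_{rr}=k_3$, $\Gamma^r_{tt}=k_4$, $\Gamma^r_{rr}=k_5$,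 $\Gamma^r_{tr}=k_6$, $\Gamma^t_{\theta\theta}=k_7$, $\Gamma^t_{\phi\phi}=k_7\sin^2\theta$, $\Gamma^\theta_{\theta t}=\Gamma^\phi_{\phi t}=k_8$, $\Gamma^\theta_{\theta r}=\Gamma^\phi_{\phi r}=k_9$, $\Gamma^r_{\theta\theta}=k_{10}$, $\Gamma^r_{\phi\phi}=k_{10}\sin^2\theta$, $\Gamma^\phi_{t\theta}=k_{11}/\sin\theta$, $\Gamma^\theta_{\phi t}=-k_{11}\sin\theta$, $\Gamma^\phi_{r\theta}=k_{12}/\sin\theta$, $\Gamma^\theta_{r\phi}=-k_{12}\sin\theta$, $\Gamma^\phi_{\theta\phi}=\cot\theta$, $\Gamma^\theta_{\phi\phi}=-\sin\theta\cos\theta$, where $k_i=k_i(t,r)$. *)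

theory Defs
  imports "HOL-Analysis.Analysis"
begin

text \<open>Coordinates: index 0 = t, 1 = r, 2 = theta, 3 = phi (index type 4).
  A point of TM is a pair (x, v) of position x and velocity v (= xdot).\<close>

type_synonym tpt = "(real^4) \<times> (real^4)"

fun iter_dir :: "'a::real_normed_vector list \<Rightarrow> ('a \<Rightarrow> real) \<Rightarrow> 'a \<Rightarrow> real" where
  "iter_dir [] f = f"
| "iter_dir (d # ds) f = (\<lambda>p. deriv (\<lambda>s. iter_dir ds f (p + s *\<^sub>R d)) 0)"

definition smooth_on :: "'a::real_normed_vector set \<Rightarrow> ('a \<Rightarrow> real) \<Rightarrow> bool" where
  "smooth_on S f \<longleftrightarrow>
     (\<forall>ds. continuous_on S (iter_dir ds f) \<and>
        (\<forall>d. \<forall>p\<in>S. (\<lambda>s. iter_dir ds f (p + s *\<^sub>R d)) differentiable (at 0)))"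

definition dx :: "4 \<Rightarrow> (tpt \<Rightarrow> real) \<Rightarrow> tpt \<Rightarrow> real" where
  "dx a f p = deriv (\<lambda>s. f (fst p + s *\<^sub>R axis a 1, snd p)) 0"

definition dv :: "4 \<Rightarrow> (tpt \<Rightarrow> real) \<Rightarrow> tpt \<Rightarrow> real" where
  "dv a f p = deriv (\<lambda>s. f (fst p, snd p + s *\<^sub>R axis a 1)) 0"

definition gten :: "(tpt \<Rightarrow> real) \<Rightarrow> tpt \<Rightarrow> real^4^4" where
  "gten L p = (\<chi> a b. (1/2) * dv a (dv b L) p)"

definition conic_subbundle :: "(real^4) set \<Rightarrow> tpt set \<Rightarrow> bool" where
  "conic_subbundle M A \<longleftrightarrow>
     open A \<and> A \<subseteq> M \<times> (UNIV - {0}) \<and> fst ` A = M \<and>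
     (\<forall>x v. (x, v) \<in> A \<longrightarrow> (\<forall>c>0. (x, c *\<^sub>R v) \<in> A))"

definition pseudo_finsler :: "(real^4) set \<Rightarrow> tpt set \<Rightarrow> (tpt \<Rightarrow> real) \<Rightarrow> bool" where
  "pseudo_finsler M A L \<longleftrightarrow>
     conic_subbundle M A \<and> smooth_on A L \<and>
     (\<forall>x v. (x, v) \<in> A \<longrightarrow> (\<forall>c>0. L (x, c *\<^sub>R v) = c\<^sup>2 * L (x, v))) \<and>
     (\<forall>p\<in>A. det (gten L p) \<noteq> 0)"

definition wfun :: "tpt \<Rightarrow> real" where
  "wfun p = sqrt ((snd p $ 2)\<^sup>2 + (sin (fst p $ 2))\<^sup>2 * (snd p $ 3)\<^sup>2)"

definition sph_sym :: "tpt set \<Rightarrow> (tpt \<Rightarrow> real) \<Rightarrow> bool" where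
  "sph_sym A L \<longleftrightarrow>
     (\<exists>F :: real \<Rightarrow> real \<Rightarrow> real \<Rightarrow> real \<Rightarrow> real \<Rightarrow> real.
        \<forall>p\<in>A. L p = F (fst p $ 0) (fst p $ 1) (snd p $ 0) (snd p $ 1) (wfun p))"

text \<open>Spherically symmetric torsion-free connection coefficients Gamma^c_{ab};
  k i t r is the coefficient k_i(t,r), i = 1..12.\<close>

definition Gam :: "(nat \<Rightarrow> real \<Rightarrow> real \<Rightarrow> real) \<Rightarrow> real^4 \<Rightarrow> 4 \<Rightarrow> 4 \<Rightarrow> 4 \<Rightarrow> real" where
  "Gam k x c a b =
    (let t = x $ 0; r = x $ 1; th = x $ 2; is = (\<lambda>p q. {a, b} = {p, q}) in
     if c = 0 then
       (if is 0 0 then k 1 t r else if is 0 1 then k 2 t r else if is 1 1 then k 3 t r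
        else if is 2 2 then k 7 t r else if is 3 3 then k 7 t r * (sin th)\<^sup>2 else 0)
     else if c = 1 then
       (if is 0 0 then k 4 t r else if is 1 1 then k 5 t r else if is 0 1 then k 6 t r
        else if is 2 2 then k 10 t r else if is 3 3 then k 10 t r * (sin th)\<^sup>2 else 0)
     else if c = 2 then
       (if is 2 0 then k 8 t r else if is 2 1 then k 9 t r
        else if is 3 0 then - k 11 t r * sin th else if is 1 3 then - k 12 t r * sin th
        else if is 3 3 then - sin th * cos th else 0)
     else
       (if is 3 0 then k 8 t r else if is 3 1 then k 9 t r
        else if is 0 2 then k 11 t r / sin th else if is 1 2 then k 12 t r / sin th
        else if is 2 3 then cot th else 0))"

definition delta :: "(nat \<Rightarrow> real \<Rightarrow> real \<Rightarrow> real) \<Rightarrow> 4 \<Rightarrow> (tpt \<Rightarrow> real) \<Rightarrow> tpt \<Rightarrow> real" where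
  "delta k a L p = dx a L p - (\<Sum>b\<in>UNIV. \<Sum>c\<in>UNIV. Gam k (fst p) c a b * (snd p $ b) * dv c L p)"

text \<open>partial_w defined through w partial_w = thetadot dotpartial_theta + phidot dotpartial_phi.\<close>

definition dw :: "(tpt \<Rightarrow> real) \<Rightarrow> tpt \<Rightarrow> real" where
  "dw L p = ((snd p $ 2) * dv 2 L p + (snd p $ 3) * dv 3 L p) / wfun p"

definition delta_w :: "(nat \<Rightarrow> real \<Rightarrow> real \<Rightarrow> real) \<Rightarrow> (tpt \<Rightarrow> real) \<Rightarrow> tpt \<Rightarrow> real" where
  "delta_w k L p =
    (let t = fst p $ 0; r = fst p $ 1 in
     wfun p * k 7 t r * dv 0 L p + wfun p * k 10 t r * dv 1 L p
     + (k 8 t r * (snd p $ 0) + k 9 t r * (snd p $ 1)) * dw L p)"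

definition chart_domain :: "(real^4) set \<Rightarrow> bool" where
  "chart_domain M \<longleftrightarrow> open M \<and> (\<forall>x\<in>M. 0 < x $ 2 \<and> x $ 2 < pi)"

end

theory Submission
  imports Defs
begin

(* At a point with w > 0 write F_w for the derivative of F in its last argument. Since L sees
   thetadot and phidot only through w, dotpartial_theta L = F_w thetadot / w,
   dotpartial_phi L = F_w sin^2 theta phidot / w, partial_theta L = F_w sin theta cos theta phidot^2 / w
   and partial_phi L = 0. Substituting into delta_theta and delta_phi gives, with
   K = k11 tdot + k12 rdot,
     w delta_theta L = - (thetadot delta_w L + sin theta phidot K F_w),
     w delta_phi L = sin theta (thetadot K F_w - sin theta phidot delta_w L),
   a pair of orthogonal combinations of (delta_w L, K F_w); where w = 0 all three operators
   vanish by the reflection symmetry w(-v) = w(v). Hence delta_theta L = delta_phi L = 0 iff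
   delta_w L = 0 and K F_w = 0. If (k11, k12) were nonzero at some point, then F_w, and with it
   dotpartial_theta L, would vanish on the open set of velocities where K and w are nonzero, so
   the theta column of the fundamental tensor would vanish there, contradicting nondegeneracy. *)

lemma eventually_nhds_preimage_open:
  fixes g :: "'a::topological_space \<Rightarrow> 'b::topological_space"
  assumes "continuous_on UNIV g" "open S" "g y \<in> S"
  shows "\<forall>\<^sub>F z in nhds y. g z \<in> S"
  using eventually_nhds_in_open[OF open_vimage[OF assms(2,1)]] assms(3) by simp

lemma eventually_line_in_open:
  fixes A :: "('a::real_normed_vector \<times> 'b::real_normed_vector) set"
  assumes "open A" "(x, v) \<in> A"
  shows "\<forall>\<^sub>F s in nhds 0. (x + s *\<^sub>R a, v + s *\<^sub>R b) \<in> A"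
  using assms by (intro eventually_nhds_preimage_open) (auto intro!: continuous_intros)

lemma exists_pos_line_in_open:
  fixes A :: "('a::real_normed_vector \<times> 'b::real_normed_vector) set"
  assumes "open A" "(x, v) \<in> A"
  obtains s where "0 < s" "(x, v + s *\<^sub>R b) \<in> A"
proof -
  obtain d where "0 < d" "\<forall>s. dist s 0 \<le> d \<longrightarrow> (x + s *\<^sub>R 0, v + s *\<^sub>R b) \<in> A"
    using eventually_line_in_open[OF assms, of 0 b] unfolding eventually_nhds_metric_le by blast
  then show ?thesis using that[of d] by simp
qed

lemma deriv_eq_0_if_eventually_const:
  fixes h :: "real \<Rightarrow> real"
  assumes "\<forall>\<^sub>F s in nhds 0. h s = c"
  shows "deriv h 0 = 0"
  using deriv_cong_ev[OF assms refl] by simp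

lemma deriv_eq_0_if_even:
  fixes h :: "real \<Rightarrow> real"
  assumes "h differentiable (at 0)" "\<forall>\<^sub>F s in nhds 0. h (- s) = h s"
  shows "deriv h 0 = 0"
proof -
  obtain D where D: "(h has_real_derivative D) (at 0)"
    using assms(1) real_differentiable_def by blast
  have minus: "((\<lambda>s. - s) has_real_derivative - 1) (at 0)"
    by (auto intro!: derivative_eq_intros)
  have "((\<lambda>s. h (- s)) has_real_derivative D * (- 1)) (at 0)"
    using D by (intro DERIV_chain2[OF _ minus]) simp
  then have "(h has_real_derivative - D) (at 0)"
    using DERIV_cong_ev[OF refl assms(2)] by simp
  then have "- D = D" using D DERIV_unique by blast
  then show ?thesis using D DERIV_imp_deriv by force
qed

lemma deriv_comp_sqrt:
  fixes f q h :: "real \<Rightarrow> real"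
  assumes f: "(f has_real_derivative D) (at (sqrt (q 0)))"
    and q: "(q has_real_derivative Q) (at 0)" and "0 < q 0"
    and h: "\<forall>\<^sub>F s in nhds 0. h s = f (sqrt (q s))"
  shows "deriv h 0 = D * Q / (2 * sqrt (q 0))"
proof -
  have "(sqrt has_real_derivative inverse (sqrt (q 0)) / 2) (at (q 0))"
    using DERIV_real_sqrt \<open>0 < q 0\<close> by blast
  from DERIV_chain2[OF f DERIV_chain2[OF this q]]
  have "((\<lambda>s. f (sqrt (q s))) has_real_derivative D * Q / (2 * sqrt (q 0))) (at 0)"
    by (simp add: field_simps)
  then have "deriv (\<lambda>s. f (sqrt (q s))) 0 = D * Q / (2 * sqrt (q 0))"
    by (rule DERIV_imp_deriv)
  with deriv_cong_ev[OF h refl] show ?thesis by simp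
qed

lemma sum_UNIV_4: "sum f (UNIV :: 4 set) = f 0 + f 1 + f 2 + f 3"
proof -
  have four: "(4::4) = 0" by simp
  show ?thesis unfolding sum_4 four by (simp add: ac_simps)
qed

lemma delta_theta_eq:
  "delta k 2 L (x, v) = dx 2 L (x, v)
     - (k 7 (x$0) (x$1) * v$2 * dv 0 L (x, v) + k 10 (x$0) (x$1) * v$2 * dv 1 L (x, v)
        + (k 8 (x$0) (x$1) * v$0 + k 9 (x$0) (x$1) * v$1) * dv 2 L (x, v)
        + ((k 11 (x$0) (x$1) * v$0 + k 12 (x$0) (x$1) * v$1) / sin (x$2) + cot (x$2) * v$3)
          * dv 3 L (x, v))"
  by (simp add: delta_def sum_UNIV_4 Gam_def Let_def doubleton_eq_iff algebra_simps
      add_divide_distrib)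

lemma delta_phi_eq:
  "delta k 3 L (x, v) = dx 3 L (x, v)
     - ((sin (x$2))\<^sup>2 * v$3 * (k 7 (x$0) (x$1) * dv 0 L (x, v) + k 10 (x$0) (x$1) * dv 1 L (x, v))
        - (sin (x$2) * (k 11 (x$0) (x$1) * v$0 + k 12 (x$0) (x$1) * v$1)
           + sin (x$2) * cos (x$2) * v$3) * dv 2 L (x, v)
        + (k 8 (x$0) (x$1) * v$0 + k 9 (x$0) (x$1) * v$1 + cot (x$2) * v$2) * dv 3 L (x, v))"
  by (simp add: delta_def sum_UNIV_4 Gam_def Let_def doubleton_eq_iff algebra_simps)

lemma wfun_nonneg: "0 \<le> wfun p"
  by (simp add: wfun_def)

lemma abs_wfun [simp]: "\<bar>wfun p\<bar> = wfun p"
  by (simp add: wfun_def)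

lemma wfun_squared: "(wfun (x, v))\<^sup>2 = (v$2)\<^sup>2 + (sin (x$2))\<^sup>2 * (v$3)\<^sup>2"
  by (simp add: wfun_def)

lemma wfun_eq_0_iff:
  assumes "sin (x$2) \<noteq> 0"
  shows "wfun (x, v) = 0 \<longleftrightarrow> v$2 = 0 \<and> v$3 = 0"
  using assms by (simp add: wfun_def add_nonneg_eq_0_iff)

lemma orthogonal_combinations_eq_0:
  fixes a c E X :: real
  assumes "a * E + c * X = 0" "c * E - a * X = 0" "a\<^sup>2 + c\<^sup>2 \<noteq> 0"
  shows "E = 0" "X = 0"
proof -
  have "(a\<^sup>2 + c\<^sup>2) * E = a * (a * E + c * X) + c * (c * E - a * X)"
    "(a\<^sup>2 + c\<^sup>2) * X = c * (a * E + c * X) - a * (c * E - a * X)"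
    by (simp_all add: power2_eq_square algebra_simps)
  then show "E = 0" "X = 0" using assms by auto
qed

lemma exists_velocity_with_nonzero_comb_and_w:
  fixes A :: "tpt set"
  assumes "open A" "(x, v0) \<in> A" "c1 \<noteq> 0 \<or> c2 \<noteq> 0"
  obtains v where "(x, v) \<in> A" "c1 * v$0 + c2 * v$1 \<noteq> 0" "wfun (x, v) \<noteq> 0"
proof -
  let ?K = "\<lambda>u :: real^4. c1 * u$0 + c2 * u$1"
  obtain v1 where v1: "(x, v1) \<in> A" "?K v1 \<noteq> 0"
  proof (cases "?K v0 = 0")
    case True
    define d :: "real^4" where "d = (\<chi> i. if i = 0 then c1 else if i = 1 then c2 else 0)"
    obtain s where s: "0 < s" "(x, v0 + s *\<^sub>R d) \<in> A"
      using exists_pos_line_in_open[OF assms(1,2)] .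
    have "?K (v0 + s *\<^sub>R d) = s * (c1\<^sup>2 + c2\<^sup>2)"
      using True by (simp add: d_def algebra_simps power2_eq_square)
    also have "\<dots> \<noteq> 0" using s(1) assms(3) by (simp add: sum_power2_eq_zero_iff)
    finally show ?thesis using that s(2) by blast
  qed (use assms(2) in blast)
  show ?thesis
  proof (cases "v1$2 = 0")
    case True
    obtain s where s: "0 < s" "(x, v1 + s *\<^sub>R axis 2 1) \<in> A"
      using exists_pos_line_in_open[OF assms(1) v1(1)] .
    have "(wfun (x, v1 + s *\<^sub>R axis 2 1))\<^sup>2 = s\<^sup>2 + (sin (x$2))\<^sup>2 * (v1$3)\<^sup>2"
      unfolding wfun_squared using True by (simp add: axis_def)
    also have "\<dots> > 0" using s(1) by (intro add_pos_nonneg) simp_all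
    finally show ?thesis using that s(2) v1(2) by (auto simp: axis_def)
  next
    case False
    then have "wfun (x, v1) \<noteq> 0" by (simp add: wfun_def add_nonneg_eq_0_iff)
    with that v1 show ?thesis by blast
  qed
qed

locale sph_sym_function =
  fixes A :: "tpt set" and L :: "tpt \<Rightarrow> real"
    and F :: "real \<Rightarrow> real \<Rightarrow> real \<Rightarrow> real \<Rightarrow> real \<Rightarrow> real"
  assumes open_A: "open A"
    and L_eq_F: "\<And>x v. (x, v) \<in> A \<Longrightarrow> L (x, v) = F (x$0) (x$1) (v$0) (v$1) (wfun (x, v))"
    and L_differentiable_on_lines:
      "\<And>x v a b. (x, v) \<in> A \<Longrightarrow> (\<lambda>s. L (x + s *\<^sub>R a, v + s *\<^sub>R b)) differentiable (at 0)"
    and sin_theta_pos: "\<And>x v. (x, v) \<in> A \<Longrightarrow> 0 < sin (x$2)"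
begin

lemma dx_phi_eq_0:
  assumes "(x, v) \<in> A"
  shows "dx 3 L (x, v) = 0"
proof -
  have "\<forall>\<^sub>F s in nhds 0. L (x + s *\<^sub>R axis 3 1, v) = L (x, v)"
    using eventually_line_in_open[OF open_A assms, of "axis 3 1" 0]
    by eventually_elim (simp add: L_eq_F assms wfun_def axis_def)
  then show ?thesis
    unfolding dx_def fst_conv snd_conv by (rule deriv_eq_0_if_eventually_const)
qed

lemma derivs_eq_0_if_w_eq_0:
  assumes "(x, v) \<in> A" "wfun (x, v) = 0"
  shows "dv 2 L (x, v) = 0" "dv 3 L (x, v) = 0" "dx 2 L (x, v) = 0"
proof -
  have v: "v$2 = 0" "v$3 = 0"
    using assms(2) sin_theta_pos[OF assms(1)] wfun_eq_0_iff[of x v] by simp_all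
  have "dv i L (x, v) = 0" if "i = 2 \<or> i = 3" for i
    unfolding dv_def fst_conv snd_conv
  proof (rule deriv_eq_0_if_even)
    show "(\<lambda>s. L (x, v + s *\<^sub>R axis i 1)) differentiable (at 0)"
      using L_differentiable_on_lines[OF assms(1), of 0 "axis i 1"] by simp
    show "\<forall>\<^sub>F s in nhds 0. L (x, v + (- s) *\<^sub>R axis i 1) = L (x, v + s *\<^sub>R axis i 1)"
      using eventually_line_in_open[OF open_A assms(1), of 0 "axis i 1"]
        eventually_line_in_open[OF open_A assms(1), of 0 "- axis i 1"]
      by eventually_elim (use that in \<open>auto simp: L_eq_F wfun_def axis_def v\<close>)
  qed
  then show "dv 2 L (x, v) = 0" "dv 3 L (x, v) = 0" by simp_all
  have "\<forall>\<^sub>F s in nhds 0. L (x + s *\<^sub>R axis 2 1, v) = L (x, v)"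
    using eventually_line_in_open[OF open_A assms(1), of "axis 2 1" 0]
    by eventually_elim (simp add: L_eq_F assms wfun_def axis_def v)
  then show "dx 2 L (x, v) = 0"
    unfolding dx_def fst_conv snd_conv by (rule deriv_eq_0_if_eventually_const)
qed

lemma F_differentiable_in_w:
  assumes "(x, v) \<in> A" "0 < wfun (x, v)"
  obtains D where "(F (x$0) (x$1) (v$0) (v$1) has_real_derivative D) (at (wfun (x, v)))"
proof -
  define w where "w = wfun (x, v)"
  define a :: "real^4" where "a = (\<chi> i. if i = 2 \<or> i = 3 then v$i else 0)"
  let ?c = "\<lambda>y. v + ((y - w) / w) *\<^sub>R a"
  have w_pos: "0 < w" using assms(2) by (simp add: w_def)
  \<comment> \<open>scaling (thetadot, phidot) by y / w changes w to y and leaves the other arguments of F alone\<close>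
  have w_c: "wfun (x, ?c y) = y" if "0 < y" for y
  proof -
    have c: "(?c y)$2 = (y / w) * v$2" "(?c y)$3 = (y / w) * v$3"
      using w_pos by (simp_all add: a_def field_simps)
    have "(wfun (x, ?c y))\<^sup>2 = (y / w)\<^sup>2 * (wfun (x, v))\<^sup>2"
      by (simp only: wfun_squared c power_mult_distrib) (simp add: algebra_simps)
    also have "\<dots> = y\<^sup>2"
      using w_pos by (simp add: w_def[symmetric] power_divide)
    finally show ?thesis
      using that wfun_nonneg by (simp add: power2_eq_iff_nonneg)
  qed
  have "\<forall>\<^sub>F y in nhds w. (x, ?c y) \<in> A"
    using w_pos assms(1) by (intro eventually_nhds_preimage_open open_A) (auto intro!: continuous_intros)
  moreover have "\<forall>\<^sub>F y in nhds w. 0 < y"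
    using eventually_nhds_in_open[of "{0<..}" w] w_pos by simp
  ultimately have F_eq: "\<forall>\<^sub>F y in nhds w. F (x$0) (x$1) (v$0) (v$1) y = L (x, ?c y)"
    by eventually_elim (simp add: L_eq_F w_c, simp add: a_def)
  obtain D0 where "((\<lambda>s. L (x + s *\<^sub>R 0, v + s *\<^sub>R a)) has_real_derivative D0) (at 0)"
    using L_differentiable_on_lines[OF assms(1)] real_differentiable_def by blast
  then have "((\<lambda>s. L (x, v + s *\<^sub>R a)) has_real_derivative D0) (at ((w - w) / w))"
    by simp
  moreover have "((\<lambda>y. (y - w) / w) has_real_derivative 1 / w) (at w)"
    using w_pos by (auto intro!: derivative_eq_intros)
  ultimately have "((\<lambda>y. L (x, ?c y)) has_real_derivative D0 * (1 / w)) (at w)"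
    by (rule DERIV_chain2)
  then have "(F (x$0) (x$1) (v$0) (v$1) has_real_derivative D0 / w) (at w)"
    using DERIV_cong_ev[OF refl F_eq] by simp
  then show ?thesis using that w_def by blast
qed

lemma deriv_L_on_line_if_w_pos:
  assumes "(x, v) \<in> A" "0 < wfun (x, v)"
    and F_w: "(F (x$0) (x$1) (v$0) (v$1) has_real_derivative D) (at (wfun (x, v)))"
    and "a$0 = 0" "a$1 = 0" "b$0 = 0" "b$1 = 0"
    and w2: "((\<lambda>s. (wfun (x + s *\<^sub>R a, v + s *\<^sub>R b))\<^sup>2) has_real_derivative Q) (at 0)"
  shows "deriv (\<lambda>s. L (x + s *\<^sub>R a, v + s *\<^sub>R b)) 0 = D * Q / (2 * wfun (x, v))"
proof -
  have "deriv (\<lambda>s. L (x + s *\<^sub>R a, v + s *\<^sub>R b)) 0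
      = D * Q / (2 * sqrt ((wfun (x + 0 *\<^sub>R a, v + 0 *\<^sub>R b))\<^sup>2))"
  proof (rule deriv_comp_sqrt[OF _ w2])
    show "(F (x$0) (x$1) (v$0) (v$1) has_real_derivative D)
        (at (sqrt ((wfun (x + 0 *\<^sub>R a, v + 0 *\<^sub>R b))\<^sup>2)))"
      using F_w by simp
    show "0 < (wfun (x + 0 *\<^sub>R a, v + 0 *\<^sub>R b))\<^sup>2"
      using assms(2) by simp
    show "\<forall>\<^sub>F s in nhds 0. L (x + s *\<^sub>R a, v + s *\<^sub>R b)
        = F (x$0) (x$1) (v$0) (v$1) (sqrt ((wfun (x + s *\<^sub>R a, v + s *\<^sub>R b))\<^sup>2))"
      using eventually_line_in_open[OF open_A assms(1), of a b]
      by eventually_elim (simp add: L_eq_F assms(4-7))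
  qed
  then show ?thesis by simp
qed

lemma derivs_if_w_pos:
  assumes "(x, v) \<in> A" "0 < wfun (x, v)"
    and F_w: "(F (x$0) (x$1) (v$0) (v$1) has_real_derivative D) (at (wfun (x, v)))"
  shows "dv 2 L (x, v) = D * v$2 / wfun (x, v)"
    and "dv 3 L (x, v) = D * (sin (x$2))\<^sup>2 * v$3 / wfun (x, v)"
    and "dx 2 L (x, v) = D * sin (x$2) * cos (x$2) * (v$3)\<^sup>2 / wfun (x, v)"
proof -
  note deriv_line = deriv_L_on_line_if_w_pos[OF assms]
  have "((\<lambda>s. (wfun (x + s *\<^sub>R 0, v + s *\<^sub>R axis 2 1))\<^sup>2) has_real_derivative 2 * v$2) (at 0)"
    unfolding wfun_squared by (simp add: axis_def) (auto intro!: derivative_eq_intros)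
  from deriv_line[OF _ _ _ _ this] show "dv 2 L (x, v) = D * v$2 / wfun (x, v)"
    by (simp add: dv_def axis_def)
  have "((\<lambda>s. (wfun (x + s *\<^sub>R 0, v + s *\<^sub>R axis 3 1))\<^sup>2)
      has_real_derivative (sin (x$2))\<^sup>2 * (2 * v$3)) (at 0)"
    unfolding wfun_squared by (simp add: axis_def) (auto intro!: derivative_eq_intros)
  from deriv_line[OF _ _ _ _ this] show "dv 3 L (x, v) = D * (sin (x$2))\<^sup>2 * v$3 / wfun (x, v)"
    by (simp add: dv_def axis_def)
  have "((\<lambda>s. (wfun (x + s *\<^sub>R axis 2 1, v + s *\<^sub>R 0))\<^sup>2)
      has_real_derivative 2 * sin (x$2) * cos (x$2) * (v$3)\<^sup>2) (at 0)"
    unfolding wfun_squared by (simp add: axis_def) (auto intro!: derivative_eq_intros)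
  from deriv_line[OF _ _ _ _ this]
  show "dx 2 L (x, v) = D * sin (x$2) * cos (x$2) * (v$3)\<^sup>2 / wfun (x, v)"
    by (simp add: dx_def axis_def)
qed

lemma dw_eq_if_w_pos:
  assumes "(x, v) \<in> A" "0 < wfun (x, v)"
    and "(F (x$0) (x$1) (v$0) (v$1) has_real_derivative D) (at (wfun (x, v)))"
  shows "dw L (x, v) = D"
proof -
  have "dw L (x, v) = D * ((v$2)\<^sup>2 + (sin (x$2))\<^sup>2 * (v$3)\<^sup>2) / (wfun (x, v))\<^sup>2"
    unfolding dw_def derivs_if_w_pos[OF assms]
    using assms(2) by (simp add: field_simps power2_eq_square)
  also have "\<dots> = D"
    unfolding wfun_squared[symmetric] using assms(2) by simp
  finally show ?thesis .
qed

lemma dv_theta_and_deltas_times_w: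
  assumes "(x, v) \<in> A" "wfun (x, v) \<noteq> 0"
  shows "dv 2 L (x, v) = dw L (x, v) * v$2 / wfun (x, v)"
    and "delta k 2 L (x, v) * wfun (x, v) = - (v$2 * delta_w k L (x, v)
      + (k 11 (x$0) (x$1) * v$0 + k 12 (x$0) (x$1) * v$1) * dw L (x, v) * sin (x$2) * v$3)"
    and "delta k 3 L (x, v) * wfun (x, v) = - ((sin (x$2))\<^sup>2 * v$3 * delta_w k L (x, v))
      + (k 11 (x$0) (x$1) * v$0 + k 12 (x$0) (x$1) * v$1) * dw L (x, v) * sin (x$2) * v$2"
proof -
  have w_pos: "0 < wfun (x, v)" using assms(2) wfun_nonneg[of "(x, v)"] by linarith
  have sin_pos: "0 < sin (x$2)" using sin_theta_pos[OF assms(1)] .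
  obtain D where F_w: "(F (x$0) (x$1) (v$0) (v$1) has_real_derivative D) (at (wfun (x, v)))"
    using F_differentiable_in_w[OF assms(1) w_pos] .
  note derivs = derivs_if_w_pos[OF assms(1) w_pos F_w]
    and dw = dw_eq_if_w_pos[OF assms(1) w_pos F_w]
  show "dv 2 L (x, v) = dw L (x, v) * v$2 / wfun (x, v)"
    using derivs(1) dw by simp
  show "delta k 2 L (x, v) * wfun (x, v) = - (v$2 * delta_w k L (x, v)
      + (k 11 (x$0) (x$1) * v$0 + k 12 (x$0) (x$1) * v$1) * dw L (x, v) * sin (x$2) * v$3)"
    unfolding delta_theta_eq delta_w_def Let_def derivs dw cot_def fst_conv snd_conv
    using w_pos sin_pos by (simp add: field_simps power2_eq_square)
  show "delta k 3 L (x, v) * wfun (x, v) = - ((sin (x$2))\<^sup>2 * v$3 * delta_w k L (x, v))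
      + (k 11 (x$0) (x$1) * v$0 + k 12 (x$0) (x$1) * v$1) * dw L (x, v) * sin (x$2) * v$2"
    unfolding delta_phi_eq delta_w_def Let_def derivs dw dx_phi_eq_0[OF assms(1)] cot_def
      fst_conv snd_conv
    using w_pos sin_pos by (simp add: field_simps power2_eq_square)
qed

lemma deltas_eq_0_if_w_eq_0:
  assumes "(x, v) \<in> A" "wfun (x, v) = 0"
  shows "delta k 2 L (x, v) = 0" "delta k 3 L (x, v) = 0" "delta_w k L (x, v) = 0"
  using assms derivs_eq_0_if_w_eq_0[OF assms] dx_phi_eq_0[OF assms(1)]
    wfun_eq_0_iff[of x v] sin_theta_pos[OF assms(1)]
  by (simp_all add: delta_theta_eq delta_phi_eq delta_w_def dw_def)

lemma delta_w_eq_0_and_K_dw_eq_0: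
  assumes "(x, v) \<in> A" "wfun (x, v) \<noteq> 0"
    and "delta k 2 L (x, v) = 0" "delta k 3 L (x, v) = 0"
  shows "delta_w k L (x, v) = 0"
    and "(k 11 (x$0) (x$1) * v$0 + k 12 (x$0) (x$1) * v$1) * dw L (x, v) = 0"
proof -
  let ?X = "(k 11 (x$0) (x$1) * v$0 + k 12 (x$0) (x$1) * v$1) * dw L (x, v)"
  have sin: "sin (x$2) \<noteq> 0" using sin_theta_pos[OF assms(1)] by simp
  note deltas = dv_theta_and_deltas_times_w(2,3)[OF assms(1,2), of k]
  have "v$2 * delta_w k L (x, v) + (sin (x$2) * v$3) * ?X = 0"
    using deltas(1) assms(3) by (simp add: algebra_simps)
  moreover have "sin (x$2) * ((sin (x$2) * v$3) * delta_w k L (x, v) - v$2 * ?X) = 0"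
    using deltas(2) assms(4) by (simp add: algebra_simps power2_eq_square)
  then have "(sin (x$2) * v$3) * delta_w k L (x, v) - v$2 * ?X = 0"
    using sin by simp
  moreover have "(v$2)\<^sup>2 + (sin (x$2) * v$3)\<^sup>2 \<noteq> 0"
    using assms(2) by (simp add: power_mult_distrib wfun_squared[symmetric])
  ultimately show "delta_w k L (x, v) = 0" "?X = 0"
    by (rule orthogonal_combinations_eq_0)+
qed

lemma delta_w_eq_0_if_deltas_eq_0:
  assumes "(x, v) \<in> A" "delta k 2 L (x, v) = 0" "delta k 3 L (x, v) = 0"
  shows "delta_w k L (x, v) = 0"
  using assms deltas_eq_0_if_w_eq_0[OF assms(1)] delta_w_eq_0_and_K_dw_eq_0(1)[OF assms(1) _ assms(2,3)]
  by blast

lemma deltas_eq_0_if_delta_w_eq_0: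
  assumes "(x, v) \<in> A" "delta_w k L (x, v) = 0" "k 11 (x$0) (x$1) = 0" "k 12 (x$0) (x$1) = 0"
  shows "delta k 2 L (x, v) = 0 \<and> delta k 3 L (x, v) = 0"
proof (cases "wfun (x, v) = 0")
  case True
  then show ?thesis using deltas_eq_0_if_w_eq_0[OF assms(1)] by blast
next
  case False
  then show ?thesis using dv_theta_and_deltas_times_w(2,3)[OF assms(1) False, of k] assms(2-4)
    by simp
qed

lemma k11_k12_eq_0_if_deltas_eq_0:
  assumes deltas: "\<forall>p\<in>A. delta k 2 L p = 0 \<and> delta k 3 L p = 0"
    and nondegenerate: "\<forall>p\<in>A. det (gten L p) \<noteq> 0"
    and "(x, v0) \<in> A"
  shows "k 11 (x$0) (x$1) = 0 \<and> k 12 (x$0) (x$1) = 0"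
proof (rule ccontr)
  assume "\<not> (k 11 (x$0) (x$1) = 0 \<and> k 12 (x$0) (x$1) = 0)"
  define K where "K u = k 11 (x$0) (x$1) * u$0 + k 12 (x$0) (x$1) * u$1" for u :: "real^4"
  obtain v where v: "(x, v) \<in> A" "K v \<noteq> 0" "wfun (x, v) \<noteq> 0"
    using exists_velocity_with_nonzero_comb_and_w[OF open_A assms(3)] \<open>\<not> _\<close> unfolding K_def by blast
  have dv_theta_eq_0: "dv 2 L (x, u) = 0" if "(x, u) \<in> A" "K u \<noteq> 0" "wfun (x, u) \<noteq> 0" for u
  proof -
    have "dw L (x, u) = 0"
      using delta_w_eq_0_and_K_dw_eq_0(2)[OF that(1,3)] deltas that(1,2) by (auto simp: K_def)
    then show ?thesis using dv_theta_and_deltas_times_w(1)[OF that(1,3)] by simp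
  qed
  have "dv b (dv 2 L) (x, v) = 0" for b
  proof -
    let ?u = "\<lambda>s. v + s *\<^sub>R axis b 1"
    have "\<forall>\<^sub>F s in nhds 0. (x, ?u s) \<in> A"
      using eventually_line_in_open[OF open_A v(1), of 0 "axis b 1"] by simp
    moreover have "\<forall>\<^sub>F s in nhds 0. K (?u s) \<in> - {0}"
      using v(2) unfolding K_def
      by (intro eventually_nhds_preimage_open) (auto intro!: continuous_intros)
    moreover have "\<forall>\<^sub>F s in nhds 0. wfun (x, ?u s) \<in> - {0}"
      using v(3) unfolding wfun_def
      by (intro eventually_nhds_preimage_open) (auto intro!: continuous_intros)
    ultimately have "\<forall>\<^sub>F s in nhds 0. dv 2 L (x, ?u s) = 0"
      by eventually_elim (simp add: dv_theta_eq_0)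
    then show ?thesis
      unfolding dv_def[of b "dv 2 L"] fst_conv snd_conv by (rule deriv_eq_0_if_eventually_const)
  qed
  then have "column 2 (gten L (x, v)) = 0"
    by (simp add: column_def gten_def vec_eq_iff)
  then have "det (gten L (x, v)) = 0"
    by (rule det_zero_column)
  with nondegenerate v(1) show False by blast
qed

end

theorem lemma1:
  fixes M :: "(real^4) set" and A :: "tpt set" and L :: "tpt \<Rightarrow> real"
    and k :: "nat \<Rightarrow> real \<Rightarrow> real \<Rightarrow> real"
  assumes "chart_domain M"
    and "pseudo_finsler M A L"
    and "sph_sym A L"
  shows "(\<forall>p\<in>A. delta k 2 L p = 0 \<and> delta k 3 L p = 0) \<longleftrightarrow>
         ((\<forall>p\<in>A. delta_w k L p = 0) \<and>
          (\<forall>x\<in>M. k 11 (x $ 0) (x $ 1) = 0 \<and> k 12 (x $ 0) (x $ 1) = 0))"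
proof -
  obtain F where F: "\<forall>p\<in>A. L p = F (fst p $ 0) (fst p $ 1) (snd p $ 0) (snd p $ 1) (wfun p)"
    using assms(3) unfolding sph_sym_def by blast
  have A: "open A" "A \<subseteq> M \<times> (UNIV - {0})" "fst ` A = M"
    and smooth: "smooth_on A L" and nondegenerate: "\<forall>p\<in>A. det (gten L p) \<noteq> 0"
    using assms(2) by (simp_all add: pseudo_finsler_def conic_subbundle_def)
  interpret sph_sym_function A L F
  proof
    fix x v a b assume xv: "(x, v) \<in> A"
    show "L (x, v) = F (x$0) (x$1) (v$0) (v$1) (wfun (x, v))" using F xv by auto
    have "(\<lambda>s. L ((x, v) + s *\<^sub>R (a, b))) differentiable (at 0)"
      using smooth xv unfolding smooth_on_def by (metis iter_dir.simps(1))
    then show "(\<lambda>s. L (x + s *\<^sub>R a, v + s *\<^sub>R b)) differentiable (at 0)" by simp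
    have "0 < x$2" "x$2 < pi" using assms(1) A(2) xv by (auto simp: chart_domain_def)
    then show "0 < sin (x$2)" by (rule sin_gt_zero)
  qed (rule A(1))
  show ?thesis
  proof (rule iffI; (rule conjI)?; intro ballI)
    fix p assume "\<forall>p\<in>A. delta k 2 L p = 0 \<and> delta k 3 L p = 0" "p \<in> A"
    then show "delta_w k L p = 0"
      using delta_w_eq_0_if_deltas_eq_0[of "fst p" "snd p" k] by simp
  next
    fix x assume deltas: "\<forall>p\<in>A. delta k 2 L p = 0 \<and> delta k 3 L p = 0" and "x \<in> M"
    then obtain v0 where "(x, v0) \<in> A" using A(3) by force
    then show "k 11 (x $ 0) (x $ 1) = 0 \<and> k 12 (x $ 0) (x $ 1) = 0"
      by (rule k11_k12_eq_0_if_deltas_eq_0[OF deltas nondegenerate])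
  next
    fix p assume "(\<forall>p\<in>A. delta_w k L p = 0) \<and>
      (\<forall>x\<in>M. k 11 (x $ 0) (x $ 1) = 0 \<and> k 12 (x $ 0) (x $ 1) = 0)" "p \<in> A"
    moreover have "fst p \<in> M" using A(2) \<open>p \<in> A\<close> by auto
    ultimately show "delta k 2 L p = 0 \<and> delta k 3 L p = 0"
      using deltas_eq_0_if_delta_w_eq_0[of "fst p" "snd p" k] by simp
  qed
qed

end
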